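(* Let $N_c, N_v$ be positive integers, let ${\tt dVc}\in(0,\infty)^{N_c}$ and ${\tt dVv}\in(0,\infty)^{N_v}$, and define $\langle {\tt a},{\tt b}\rangle_c={\tt a}^\top\mathrm{diag}({\tt dVc})\,{\tt b}$ on $\mathbb R^{N_c}$ and $\langle {\tt a},{\tt b}\rangle_v={\tt a}^\top\mathrm{diag}({\tt dVv})\,{\tt b}$ on $\mathbb R^{N_v}$. Let $R:\mathbb R\to(0,\infty)$ be continuously differentiable and non-decreasing, fix $p_0\in\mathbb R$, and set $Q(p)=\int_{p_0}^p \frac{1}{R(q)}\,\mathrm dq$ and $e_{int}(p)=\int_{p_0}^p\frac{R(p)-R(q)}{R(q)}\,\mathrm dq$, all functions being applied componentwise to vectors. Let ${\sf Interp}_{v\leftarrow c}$ be a fixed real $N_v\times N_c$ matrix. Let ${\tt p}(t)\in\mathbb R^{N_c}$ and ${\tt v}(t)\in\mathbb R^{N_v}$, $t\in[0,T]$, be continuously differentiable, set ${\tt rho}=R({\tt p})$ and ${\tt rv}=\mathrm{diag}({\sf Interp}_{v\leftarrow c}{\tt rho})\,{\tt v}$, and suppose that for every $t$ there are real matrices ${\sf DIVr}(t)$ ($N_c\times N_v$), ${\sf rGRAD}(t)$, ${\sf GRAD}(t)$ ($N_v\times N_c$) and ${\sf ADVEC}(t)$ ($N_v\times N_v$) such that (i) ${\sf DIVr}+{\sf rGRAD}^*=0$; (ii) ${\sf rGRAD}\,Q({\tt p})={\sf GRAD}\,{\tt p}$; (iii) ${\sf ADVEC}+{\sf ADVEC}^*=\mathrm{diag}({\sf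 Interp}_{v\leftarrow c}\,{\sf DIVr}\,{\tt v})$; and the semi-discrete isentropic Euler equations $$\frac{\mathrm d\,{\tt rho}}{\mathrm dt}+{\sf DIVr}\,{\tt v}=0,\qquad \frac{\mathrm d\,{\tt rv}}{\mathrm dt}+{\sf ADVEC}\,{\tt v}+{\sf GRAD}\,{\tt p}=0$$ hold. Then the discrete total energy ${\tt E}(t)=\langle {\tt c1},e_{int}({\tt p})\rangle_c+\frac12\langle {\tt v},{\tt rv}\rangle_v$, where ${\tt c1}$ is the vector of all ones, satisfies $\frac{\mathrm d{\tt E}}{\mathrm dt}=0$.
   Context: Adjoints are taken with respect to the weighted inner products: for a real matrix ${\sf A}$ mapping $\mathbb R^{N_{in}}$ (weights ${\tt dV}_{in}$) to $\mathbb R^{N_{out}}$ (weights ${\tt dV}_{out}$), ${\sf A}^*=\mathrm{diag}({\tt dV}_{in})^{-1}{\sf A}^\top\mathrm{diag}({\tt dV}_{out})$, so that $\langle {\tt x},{\sf A}{\tt y}\rangle_{out}=\langle{\sf A}^*{\tt x},{\tt y}\rangle_{in}$. Here $\mathrm{diag}({\tt a})$ is the diagonal matrix with the entries of ${\tt a}$ on its diagonal. The matrices ${\sf DIVr},{\sf rGRAD},{\sf GRAD},{\sf ADVEC}$ are allowed to depend on the state at time $t$. *)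

theory Defs
  imports "HOL-Analysis.Analysis"
begin

definition oint :: "real \<Rightarrow> real \<Rightarrow> (real \<Rightarrow> real) \<Rightarrow> real" where
  "oint a b f = (if a \<le> b then integral {a..b} f else - integral {b..a} f)"

definition wip :: "real^'n \<Rightarrow> real^'n \<Rightarrow> real^'n \<Rightarrow> real" where
  "wip w a b = (\<Sum>i\<in>UNIV. a $ i * w $ i * b $ i)"

definition diagm :: "real^'n \<Rightarrow> real^'n^'n" where
  "diagm a = (\<chi> i j. if i = j then a $ i else 0)"

text \<open>Adjoint of A : R^in (weights dVin) -> R^out (weights dVout):
  diag(dVin)^-1 A^T diag(dVout).\<close>
definition wadj :: "real^'i \<Rightarrow> real^'o \<Rightarrow> real^'i^'o \<Rightarrow> real^'o^'i" where
  "wadj dVin dVout A = (\<chi> i j. A $ j $ i * dVout $ j / dVin $ i)"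

definition cw :: "(real \<Rightarrow> real) \<Rightarrow> real^'n \<Rightarrow> real^'n" where
  "cw f x = (\<chi> i. f (x $ i))"

definition Qfun :: "(real \<Rightarrow> real) \<Rightarrow> real \<Rightarrow> real \<Rightarrow> real" where
  "Qfun R p0 p = oint p0 p (\<lambda>q. 1 / R q)"

definition eint :: "(real \<Rightarrow> real) \<Rightarrow> real \<Rightarrow> real \<Rightarrow> real" where
  "eint R p0 p = oint p0 p (\<lambda>q. (R p - R q) / R q)"

end

theory Submission
  imports Defs
begin

(* With Q' = 1/R the internal energy density is e_int(p) = R(p) Q(p) - (p - p0), so its time
   derivative is rho' Q(p): only the rate of the density enters.  Writing the kinetic energy
   density as (a v) v - a v^2/2 with a = Interp rho, its derivative only involves the rate of the
   momentum a v and of a, so v' drops out as well.  After substituting the two evolution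
   equations, the pressure terms <DIVr v, Q(p)>_c and <v, GRAD p>_v cancel by (i) and (ii), and
   <v, ADVEC v>_v, which by (iii) is half of <v, diag(Interp DIVr v) v>_v, cancels the
   density-rate term of the kinetic energy. *)

lemma oint_cmult: "oint a b (\<lambda>q. c * f q) = c * oint a b f"
  by (simp add: oint_def)

lemma oint_const: "oint a b (\<lambda>_. c) = c * (b - a)"
  by (simp add: oint_def algebra_simps)

lemma oint_diff:
  fixes f g :: "real \<Rightarrow> real"
  assumes "continuous_on UNIV f" "continuous_on UNIV g"
  shows "oint a b (\<lambda>q. f q - g q) = oint a b f - oint a b g"
  using assms by (simp add: oint_def integral_diff integrable_continuous_real continuous_on_subset)

lemma oint_split:
  fixes f :: "real \<Rightarrow> real"
  assumes f: "continuous_on UNIV f" and "c \<le> a" "c \<le> b"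
  shows "oint a b f = integral {c..b} f - integral {c..a} f"
proof -
  have "integral {c..x} f + integral {x..y} f = integral {c..y} f" if "c \<le> x" "x \<le> y" for x y
    using that
    by (auto intro!: Henstock_Kurzweil_Integration.integral_combine integrable_continuous_real
        continuous_on_subset[OF f])
  then show ?thesis
    using assms(2,3) by (cases "a \<le> b") (auto simp: oint_def algebra_simps)
qed

lemma has_real_derivative_oint_upper:
  fixes f :: "real \<Rightarrow> real"
  assumes f: "continuous_on UNIV f"
  shows "((\<lambda>b. oint a b f) has_real_derivative f x) (at x)"
proof -
  define c where "c = min a x - 1"
  have "((\<lambda>b. integral {c..b} f) has_real_derivative f x) (at x within {c..max a x + 1})"
    by (rule integral_has_real_derivative) (auto simp: c_def intro: continuous_on_subset[OF f])
  then have "((\<lambda>b. integral {c..b} f - integral {c..a} f) has_real_derivative f x) (at x)"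
    using at_within_Icc_at[of c x "max a x + 1"] by (auto simp: c_def intro!: derivative_eq_intros)
  then show ?thesis
    by (rule has_field_derivative_transform_within_open[where S="{c<..}"])
      (use oint_split[OF f, of c a] in \<open>auto simp: c_def\<close>)
qed

lemma Qfun_has_real_derivative:
  assumes "continuous_on UNIV R" "\<And>x. R x \<noteq> 0"
  shows "(Qfun R p0 has_real_derivative 1 / R x) (at x)"
  unfolding Qfun_def using assms by (auto intro!: has_real_derivative_oint_upper continuous_intros)

lemma eint_eq_Qfun:
  assumes "continuous_on UNIV R" "\<And>x. R x \<noteq> 0"
  shows "eint R p0 x = R x * Qfun R p0 x - (x - p0)"
proof -
  have "eint R p0 x = oint p0 x (\<lambda>q. R x * (1 / R q) - 1)"
    unfolding eint_def using assms(2) by (simp add: diff_divide_distrib)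
  also have "\<dots> = oint p0 x (\<lambda>q. R x * (1 / R q)) - oint p0 x (\<lambda>_. 1)"
    using assms by (intro oint_diff continuous_intros) auto
  also have "\<dots> = R x * oint p0 x (\<lambda>q. 1 / R q) - oint p0 x (\<lambda>_. 1)"
    by (simp only: oint_cmult)
  also have "\<dots> = R x * Qfun R p0 x - (x - p0)"
    by (simp add: oint_const Qfun_def)
  finally show ?thesis .
qed

lemma eint_comp_has_real_derivative:
  assumes R: "continuous_on UNIV R" "\<And>x. R x \<noteq> 0"
    and p: "(p has_real_derivative p') (at t within S)"
    and rho: "((\<lambda>s. R (p s)) has_real_derivative r') (at t within S)"
  shows "((\<lambda>s. eint R p0 (p s)) has_real_derivative r' * Qfun R p0 (p t)) (at t within S)"
proof -
  have "((\<lambda>s. R (p s) * Qfun R p0 (p s) - (p s - p0)) has_real_derivative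
      R (p t) * (1 / R (p t) * p') + r' * Qfun R p0 (p t) - (p' - 0)) (at t within S)"
    by (intro DERIV_diff DERIV_mult' rho DERIV_chain2[OF Qfun_has_real_derivative[OF R] p] p DERIV_const)
  then show ?thesis
    using R(2)[of "p t"] by (simp add: eint_eq_Qfun[OF R])
qed

lemma weighted_square_has_real_derivative:
  fixes a u :: "real \<Rightarrow> real"
  assumes a: "(a has_real_derivative a') (at t within S)"
    and u: "(u has_real_derivative u') (at t within S)"
    and m: "((\<lambda>s. a s * u s) has_real_derivative m') (at t within S)"
  shows "((\<lambda>s. a s * u s * u s) has_real_derivative 2 * u t * m' - a' * u t * u t) (at t within S)"
proof -
  \<comment> \<open>Differentiating the product a u as a whole makes u' cancel.\<close>
  have "((\<lambda>s. 2 * (a s * u s * u s) - a s * (u s * u s)) has_real_derivative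
      2 * (a t * u t * u' + m' * u t) - (a t * (u t * u' + u' * u t) + a' * (u t * u t))) (at t within S)"
    by (intro DERIV_diff DERIV_cmult DERIV_mult' a u m)
  then show ?thesis
    by (simp add: algebra_simps)
qed

lemma has_real_derivative_vec_nth:
  "(f has_vector_derivative f') F \<Longrightarrow> ((\<lambda>s. f s $ i) has_real_derivative f' $ i) F"
  using bounded_linear.has_vector_derivative[OF bounded_linear_vec_nth]
  by (simp add: has_real_derivative_iff_has_vector_derivative)

lemma diagm_mult_vec: "(diagm a *v x) $ i = a $ i * x $ i"
proof -
  have "(\<Sum>j\<in>UNIV. (if i = j then a $ i else 0) * x $ j) = (\<Sum>j\<in>UNIV. if i = j then a $ i * x $ j else 0)"
    by (rule sum.cong) auto
  then show ?thesis
    by (simp add: diagm_def matrix_vector_mult_def)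
qed

lemma wip_commute: "wip w x y = wip w y x"
  by (simp add: wip_def mult_ac)

lemma wip_add_right: "wip w x (y + z) = wip w x y + wip w x z"
  by (simp add: wip_def algebra_simps sum.distrib)

lemma wip_add_left: "wip w (x + y) z = wip w x z + wip w y z"
  by (simp add: wip_def algebra_simps sum.distrib)

lemma wip_wadj:
  assumes "\<forall>i. dVin $ i \<noteq> 0"
  shows "wip dVout x (A *v y) = wip dVin (wadj dVin dVout A *v x) y"
proof -
  have "wip dVout x (A *v y) = (\<Sum>j\<in>UNIV. \<Sum>i\<in>UNIV. x $ j * dVout $ j * A $ j $ i * y $ i)"
    by (simp add: wip_def matrix_vector_mult_def sum_distrib_left mult_ac)
  also have "\<dots> = (\<Sum>i\<in>UNIV. \<Sum>j\<in>UNIV. x $ j * dVout $ j * A $ j $ i * y $ i)"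
    by (rule sum.swap)
  also have "\<dots> = wip dVin (wadj dVin dVout A *v x) y"
    using assms by (simp add: wip_def wadj_def matrix_vector_mult_def sum_distrib_left sum_distrib_right mult_ac)
  finally show ?thesis .
qed

lemma wip_neg_adjoint:
  assumes "\<forall>i. dVin $ i \<noteq> 0" and "D + wadj dVin dVout G = 0"
  shows "wip dVin (D *v x) y = - wip dVout x (G *v y)"
proof -
  have "wip dVin (D *v x) y + wip dVin (wadj dVin dVout G *v x) y
      = wip dVin ((D + wadj dVin dVout G) *v x) y"
    by (simp only: matrix_vector_mult_add_rdistrib wip_add_left)
  also have "\<dots> = 0"
    by (simp add: assms(2) wip_def)
  finally show ?thesis
    using wip_wadj[OF assms(1), of dVout x G y] by simp
qed

lemma wip_quadratic_form_sym_part: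
  assumes "\<forall>i. w $ i \<noteq> 0" and "A + wadj w w A = diagm d"
  shows "2 * wip w x (A *v x) = wip w x (diagm d *v x)"
proof -
  have "wip w x (wadj w w A *v x) = wip w x (A *v x)"
    using wip_wadj[OF assms(1), of w x A x] by (simp add: wip_commute)
  then show ?thesis
    by (simp flip: assms(2) add: matrix_vector_mult_add_rdistrib wip_add_right)
qed

lemma internal_energy_has_real_derivative:
  fixes p :: "real \<Rightarrow> real^'n"
  assumes R: "continuous_on UNIV R" "\<And>x. R x \<noteq> 0"
    and p: "(p has_vector_derivative p') (at t within S)"
    and rho: "((\<lambda>s. cw R (p s)) has_vector_derivative r') (at t within S)"
  shows "((\<lambda>s. wip w (\<chi> i. 1) (cw (eint R p0) (p s))) has_real_derivative
      wip w r' (cw (Qfun R p0) (p t))) (at t within S)"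
proof -
  have "((\<lambda>s. R (p s $ i)) has_real_derivative r' $ i) (at t within S)" for i
    using has_real_derivative_vec_nth[OF rho, of i] by (simp add: cw_def)
  then have "((\<lambda>s. eint R p0 (p s $ i)) has_real_derivative r' $ i * Qfun R p0 (p t $ i)) (at t within S)" for i
    by (rule eint_comp_has_real_derivative[OF R has_real_derivative_vec_nth[OF p]])
  then have "((\<lambda>s. \<Sum>i\<in>UNIV. w $ i * eint R p0 (p s $ i)) has_real_derivative
      (\<Sum>i\<in>UNIV. w $ i * (r' $ i * Qfun R p0 (p t $ i)))) (at t within S)"
    by (intro DERIV_sum DERIV_cmult)
  then show ?thesis
    by (simp add: wip_def cw_def mult_ac)
qed

lemma kinetic_energy_has_real_derivative:
  fixes a u :: "real \<Rightarrow> real^'n"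
  assumes a: "(a has_vector_derivative a') (at t within S)"
    and u: "(u has_vector_derivative u') (at t within S)"
    and m: "((\<lambda>s. diagm (a s) *v u s) has_vector_derivative m') (at t within S)"
  shows "((\<lambda>s. wip w (u s) (diagm (a s) *v u s)) has_real_derivative
      2 * wip w (u t) m' - wip w (u t) (diagm a' *v u t)) (at t within S)"
proof -
  have "((\<lambda>s. a s $ i * u s $ i) has_real_derivative m' $ i) (at t within S)" for i
    using has_real_derivative_vec_nth[OF m, of i] by (simp add: diagm_mult_vec)
  then have "((\<lambda>s. a s $ i * u s $ i * u s $ i) has_real_derivative
      2 * u t $ i * m' $ i - a' $ i * u t $ i * u t $ i) (at t within S)" for i
    by (rule weighted_square_has_real_derivative[OF has_real_derivative_vec_nth[OF a]
          has_real_derivative_vec_nth[OF u]])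
  then have "((\<lambda>s. \<Sum>i\<in>UNIV. w $ i * (a s $ i * u s $ i * u s $ i)) has_real_derivative
      (\<Sum>i\<in>UNIV. w $ i * (2 * u t $ i * m' $ i - a' $ i * u t $ i * u t $ i))) (at t within S)"
    by (intro DERIV_sum DERIV_cmult)
  then show ?thesis
    by (simp add: wip_def diagm_mult_vec sum_subtractf sum_distrib_left algebra_simps)
qed

theorem mainTheorem1:
  fixes dVc :: "real^'c" and dVv :: "real^'v"
    and R R' :: "real \<Rightarrow> real" and p0 T :: real
    and Interp :: "real^'c^'v"
    and p p' :: "real \<Rightarrow> real^'c" and v v' :: "real \<Rightarrow> real^'v"
    and DIVr :: "real \<Rightarrow> real^'v^'c"
    and rGRAD GRAD :: "real \<Rightarrow> real^'c^'v"
    and ADVEC :: "real \<Rightarrow> real^'v^'v"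
  defines "rho \<equiv> (\<lambda>t. cw R (p t))"
    and "rv \<equiv> (\<lambda>t. diagm (Interp *v cw R (p t)) *v v t)"
    and "E \<equiv> (\<lambda>t. wip dVc (\<chi> i. 1) (cw (eint R p0) (p t)) + 1/2 * wip dVv (v t) (diagm (Interp *v cw R (p t)) *v v t))"
  assumes dVc_pos: "\<forall>i. dVc $ i > 0"
    and dVv_pos: "\<forall>i. dVv $ i > 0"
    and R_pos: "\<forall>x. R x > 0"
    and R_deriv: "\<forall>x. (R has_real_derivative R' x) (at x)"
    and R'_cont: "continuous_on UNIV R'"
    and R_mono: "mono R"
    and p_deriv: "\<forall>t\<in>{0..T}. (p has_vector_derivative p' t) (at t within {0..T})"
    and p'_cont: "continuous_on {0..T} p'"
    and v_deriv: "\<forall>t\<in>{0..T}. (v has_vector_derivative v' t) (at t within {0..T})"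
    and v'_cont: "continuous_on {0..T} v'"
    and i: "\<forall>t\<in>{0..T}. DIVr t + wadj dVc dVv (rGRAD t) = 0"
    and ii: "\<forall>t\<in>{0..T}. rGRAD t *v cw (Qfun R p0) (p t) = GRAD t *v p t"
    and iii: "\<forall>t\<in>{0..T}. ADVEC t + wadj dVv dVv (ADVEC t) = diagm (Interp *v (DIVr t *v v t))"
    and mass: "\<forall>t\<in>{0..T}. (rho has_vector_derivative - (DIVr t *v v t)) (at t within {0..T})"
    and momentum: "\<forall>t\<in>{0..T}. (rv has_vector_derivative - (ADVEC t *v v t + GRAD t *v p t)) (at t within {0..T})"
  shows "\<forall>t\<in>{0..T}. (E has_real_derivative 0) (at t within {0..T})"
proof
  fix t assume t: "t \<in> {0..T}"
  define d where "d = Interp *v (DIVr t *v v t)"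
  have R_cont: "continuous_on UNIV R"
    using R_deriv by (meson DERIV_isCont continuous_at_imp_continuous_on)
  have R_nz: "R x \<noteq> 0" for x
    using R_pos by (metis less_irrefl)
  have rho_deriv: "(rho has_vector_derivative - (DIVr t *v v t)) (at t within {0..T})"
    using mass t by blast
  have "((\<lambda>s. Interp *v rho s) has_vector_derivative - d) (at t within {0..T})"
    using bounded_linear.has_vector_derivative[OF matrix_vector_mul_bounded_linear rho_deriv, of Interp]
      matrix_vector_mult_diff_distrib[of Interp 0]
    by (simp add: d_def)
  then have "(E has_real_derivative
      wip dVc (- (DIVr t *v v t)) (cw (Qfun R p0) (p t))
      + 1/2 * (2 * wip dVv (v t) (- (ADVEC t *v v t + GRAD t *v p t)) - wip dVv (v t) (diagm (- d) *v v t)))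
      (at t within {0..T})" (is "(E has_real_derivative ?E') _")
    unfolding E_def using p_deriv v_deriv momentum rho_deriv t
    by (intro DERIV_add DERIV_cmult internal_energy_has_real_derivative kinetic_energy_has_real_derivative
        R_cont R_nz) (auto simp: rho_def rv_def)
  moreover have "?E' = - wip dVc (DIVr t *v v t) (cw (Qfun R p0) (p t)) - wip dVv (v t) (GRAD t *v p t)
      - wip dVv (v t) (ADVEC t *v v t) + 1/2 * wip dVv (v t) (diagm d *v v t)"
    by (simp add: wip_def diagm_mult_vec algebra_simps sum_negf sum_subtractf sum.distrib)
  moreover have "wip dVc (DIVr t *v v t) (cw (Qfun R p0) (p t)) = - wip dVv (v t) (GRAD t *v p t)"
    using wip_neg_adjoint dVc_pos i ii t by (metis less_irrefl)
  moreover have "2 * wip dVv (v t) (ADVEC t *v v t) = wip dVv (v t) (diagm d *v v t)"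
    using wip_quadratic_form_sym_part dVv_pos iii t unfolding d_def by (metis less_irrefl)
  ultimately show "(E has_real_derivative 0) (at t within {0..T})"
    by (simp add: DERIV_cong)
qed

end
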